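(* Assume $\chi$ is weakly generic, let $\sigma=\sigma_{a,b}$ be a Serre weight with $\mathcal{S}(\chi_1,\chi_2,\sigma)\neq\varnothing$, let $(J,x)$ be its maximal element, and let $s,t,r,\mathcal{I}_\tau$ be as in the context. Then for every $\tau\in\Sigma$: $t_\tau\in\mathcal{I}_\tau$ if and only if $t_\tau<r_\tau$.
   Context: Let $p$ be a prime, $K/\mathbf{Q}_p$ finite with residue field $k$, residue degree $f$, ramification index $e$; $I_K$ inertia. Fix $\varpi\in\overline{K}$ with $\varpi^{p^f-1}$ a uniformiser; $\omega\colon G_K\to k^\times$ sends $g$ to the reduction of $g(\varpi)/\varpi$. $\Sigma=\mathrm{Hom}_{\mathbf{F}_p}(k,\overline{\mathbf{F}}_p)$, $\varphi(x)=x^p$, $\omega_\tau=\tau\circ\omega$, $\Omega_{\tau,a}=\sum_{i=0}^{f-1}p^ia_{\tau\circ\varphi^i}$. $\chi_1,\chi_2\colon G_K\to\overline{\mathbf{F}}_p^\times$ continuous, $\chi=\chi_1\chi_2^{-1}=\psi\prod_\tau\omega_\tau^{n_\tau}$, $\psi$ unramified, $n_\tau\in[1,p]$, some $n_\tau<p$. Weakly generic: $n_\tau\in[e,p-e]$ for all $\tau$. Serre weight $\sigma_{a,b}=\bigotimes_\tau(\det^{b_\tau}\otimes\mathrm{Sym}^{a_\tau-b_\tau}k^2)\otimes_{k,\tau}\overline{\mathbf{F}}_p$, $a_\tau-b_\tau\in[0,p-1]$; $r_\tau=a_\tau-b_\tau+1$. $\mathcal{S}(\chi_1,\chi_2,\sigma)$: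 pairs $(J,x)$, $J\subseteq\Sigma$, $x_\tau\in[0,e-1]$, with $\chi_1|_{I_K}=\prod_{\tau\in J}\omega_\tau^{a_\tau+1+x_\tau}\prod_{\tau\notin J}\omega_\tau^{b_\tau+x_\tau}$ and $\chi_2|_{I_K}=\prod_{\tau\notin J}\omega_\tau^{a_\tau+e-x_\tau}\prod_{\tau\in J}\omega_\tau^{b_\tau+e-1-x_\tau}$. $s=s(J,x)$: $s_\tau=r_\tau+x_\tau$ if $\tau\in J$, $s_\tau=x_\tau$ if $\tau\notin J$. Order: $(J,x)\preceq(J',x')$ iff $\Omega_{\tau,s(J',x')-s(J,x)}\in(p^f-1)\mathbf{Z}_{\ge0}$ for all $\tau$; a non-empty $\mathcal{S}$ has a unique maximal element. For the maximal $(J,x)$: $s=s(J,x)$, $t_\tau=a_\tau-b_\tau+e-s_\tau$, and $\mathcal{I}_\tau=[0,s_\tau-1]$ if $\tau\notin J$, $\mathcal{I}_\tau=\{t_\tau\}\cup[r_\tau,s_\tau-1]$ if $\tau\in J$ (integer intervals, empty if the upper end is below the lower end). *)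

theory Defs
  imports Main "HOL-Number_Theory.Cong"
begin

(* Sigma = Hom(k, Fpbar) is indexed by {..<f}: index i stands for tau0 o phi^i for a fixed
   embedding tau0, so tau o phi^j corresponds to (i + j) mod f.
   Functions indexed by Sigma are functions on nat; only values on {..<f} matter.
   Characters of I_K of the form prod_tau omega_tau^(c_tau) equal omega_{tau0}^(Omega_{tau0,c});
   a character chi_i of G_K restricted to I_K is recorded by an integer exponent c_i with
   chi_i|_{I_K} = omega_{tau0}^{c_i}; equality of such characters is congruence mod p^f - 1. *)

definition Omega :: "nat \<Rightarrow> nat \<Rightarrow> nat \<Rightarrow> (nat \<Rightarrow> int) \<Rightarrow> int" where
  "Omega p f \<tau> a = (\<Sum>i<f. int p ^ i * a ((\<tau> + i) mod f))"

definition rr :: "(nat \<Rightarrow> int) \<Rightarrow> (nat \<Rightarrow> int) \<Rightarrow> nat \<Rightarrow> int" where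
  "rr a b \<tau> = a \<tau> - b \<tau> + 1"

definition ss :: "(nat \<Rightarrow> int) \<Rightarrow> (nat \<Rightarrow> int) \<Rightarrow> nat set \<Rightarrow> (nat \<Rightarrow> nat) \<Rightarrow> nat \<Rightarrow> int" where
  "ss a b J x \<tau> = (if \<tau> \<in> J then rr a b \<tau> + int (x \<tau>) else int (x \<tau>))"

definition tt :: "nat \<Rightarrow> (nat \<Rightarrow> int) \<Rightarrow> (nat \<Rightarrow> int) \<Rightarrow> nat set \<Rightarrow> (nat \<Rightarrow> nat) \<Rightarrow> nat \<Rightarrow> int" where
  "tt e a b J x \<tau> = a \<tau> - b \<tau> + int e - ss a b J x \<tau>"

definition II :: "nat \<Rightarrow> (nat \<Rightarrow> int) \<Rightarrow> (nat \<Rightarrow> int) \<Rightarrow> nat set \<Rightarrow> (nat \<Rightarrow> nat) \<Rightarrow> nat \<Rightarrow> int set" where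
  "II e a b J x \<tau> =
     (if \<tau> \<notin> J then {0 .. ss a b J x \<tau> - 1}
      else {tt e a b J x \<tau>} \<union> {rr a b \<tau> .. ss a b J x \<tau> - 1})"

(* membership (J,x) in S(chi_1,chi_2,sigma_{a,b}); c1, c2 are the exponents of chi_1|_{I_K},
   chi_2|_{I_K} with respect to omega_{tau0}. x is extensional (0 outside Sigma). *)
definition inS :: "nat \<Rightarrow> nat \<Rightarrow> nat \<Rightarrow> (nat \<Rightarrow> int) \<Rightarrow> (nat \<Rightarrow> int) \<Rightarrow> int \<Rightarrow> int
                   \<Rightarrow> nat set \<Rightarrow> (nat \<Rightarrow> nat) \<Rightarrow> bool" where
  "inS p f e a b c1 c2 J x \<longleftrightarrow>
     J \<subseteq> {..<f} \<and> (\<forall>\<tau><f. x \<tau> \<le> e - 1) \<and> (\<forall>\<tau>. f \<le> \<tau> \<longrightarrow> x \<tau> = 0) \<and>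
     [c1 = Omega p f 0 (\<lambda>\<tau>. if \<tau> \<in> J then a \<tau> + 1 + int (x \<tau>) else b \<tau> + int (x \<tau>))]
        (mod (int p ^ f - 1)) \<and>
     [c2 = Omega p f 0 (\<lambda>\<tau>. if \<tau> \<notin> J then a \<tau> + int e - int (x \<tau>)
                               else b \<tau> + int e - 1 - int (x \<tau>))]
        (mod (int p ^ f - 1))"

definition Sle :: "nat \<Rightarrow> nat \<Rightarrow> (nat \<Rightarrow> int) \<Rightarrow> (nat \<Rightarrow> int) \<Rightarrow> nat set \<Rightarrow> (nat \<Rightarrow> nat)
                   \<Rightarrow> nat set \<Rightarrow> (nat \<Rightarrow> nat) \<Rightarrow> bool" where
  "Sle p f a b J x J' x' \<longleftrightarrow>
     (\<forall>\<tau><f. \<exists>m::nat. Omega p f \<tau> (\<lambda>i. ss a b J' x' i - ss a b J x i) = (int p ^ f - 1) * int m)"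

end

theory Submission
  imports Defs
begin

text \<open>A pair \<open>(J, x)\<close> is determined neither by the characters nor by \<open>s(J, x)\<close>: an embedding
  \<open>\<tau> \<in> J\<close> contributes \<open>a\<^sub>\<tau> + 1 + x\<^sub>\<tau> = b\<^sub>\<tau> + (r\<^sub>\<tau> + x\<^sub>\<tau>)\<close> to \<open>\<chi>\<^sub>1\<close>, exactly what \<open>\<tau> \<notin> J\<close> with
  \<open>x\<^sub>\<tau>\<close> replaced by \<open>r\<^sub>\<tau> + x\<^sub>\<tau>\<close> contributes, and likewise for \<open>\<chi>\<^sub>2\<close> and \<open>s\<^sub>\<tau>\<close>. Two pairs with
  the same \<open>s\<close> are comparable both ways, so the maximal pair admits no such move: for \<open>\<tau> \<in> J\<close>
  this forces \<open>r\<^sub>\<tau> + x\<^sub>\<tau> \<ge> e\<close>, i.e. \<open>t\<^sub>\<tau> < r\<^sub>\<tau>\<close>, and for \<open>\<tau> \<notin> J\<close> it forces \<open>x\<^sub>\<tau> < r\<^sub>\<tau>\<close>, which puts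
  \<open>t\<^sub>\<tau>\<close> above \<open>[0, s\<^sub>\<tau> - 1]\<close>.\<close>

lemma Sle_if_ss_eq:
  assumes "ss a b J' x' = ss a b J x"
  shows "Sle p f a b J x J' x'"
  using assms unfolding Sle_def by (auto simp: Omega_def)

lemma maximal_eq_if_ss_eq:
  assumes "\<forall>J' x'. inS p f e a b c1 c2 J' x' \<longrightarrow> Sle p f a b J x J' x' \<longrightarrow> (J', x') = (J, x)"
    and "inS p f e a b c1 c2 J' x'" and "ss a b J' x' = ss a b J x"
  shows "J' = J"
  using assms Sle_if_ss_eq by blast

lemma
  fixes a b :: "nat \<Rightarrow> int" and x :: "nat \<Rightarrow> nat" and \<tau> :: nat
  assumes "\<tau> \<in> J" and "0 \<le> a \<tau> - b \<tau>"
  defines "x' \<equiv> x(\<tau> := nat (rr a b \<tau> + int (x \<tau>)))"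
  shows ss_remove_from_J: "ss a b (J - {\<tau>}) x' = ss a b J x"
    and inS_remove_from_J:
      "inS p f e a b c1 c2 J x \<Longrightarrow> int (x \<tau>) + rr a b \<tau> \<le> int e - 1
        \<Longrightarrow> inS p f e a b c1 c2 (J - {\<tau>}) x'"
proof -
  show "ss a b (J - {\<tau>}) x' = ss a b J x"
    using assms by (auto simp: fun_eq_iff x'_def rr_def ss_def)
next
  assume "inS p f e a b c1 c2 J x" and "int (x \<tau>) + rr a b \<tau> \<le> int e - 1"
  moreover have "(\<lambda>i. if i \<in> J - {\<tau>} then a i + 1 + int (x' i) else b i + int (x' i))
      = (\<lambda>i. if i \<in> J then a i + 1 + int (x i) else b i + int (x i))"
    and "(\<lambda>i. if i \<notin> J - {\<tau>} then a i + int e - int (x' i) else b i + int e - 1 - int (x' i))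
      = (\<lambda>i. if i \<notin> J then a i + int e - int (x i) else b i + int e - 1 - int (x i))"
    using assms by (auto simp: fun_eq_iff x'_def rr_def)
  ultimately show "inS p f e a b c1 c2 (J - {\<tau>}) x'"
    using assms unfolding inS_def by (auto simp: x'_def rr_def)
qed

lemma
  fixes a b :: "nat \<Rightarrow> int" and x :: "nat \<Rightarrow> nat" and \<tau> :: nat
  assumes "\<tau> \<notin> J" and "rr a b \<tau> \<le> int (x \<tau>)"
  defines "x' \<equiv> x(\<tau> := nat (int (x \<tau>) - rr a b \<tau>))"
  shows ss_insert_into_J: "ss a b (insert \<tau> J) x' = ss a b J x"
    and inS_insert_into_J:
      "inS p f e a b c1 c2 J x \<Longrightarrow> \<tau> < f \<Longrightarrow> 0 \<le> a \<tau> - b \<tau>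
        \<Longrightarrow> inS p f e a b c1 c2 (insert \<tau> J) x'"
proof -
  show "ss a b (insert \<tau> J) x' = ss a b J x"
    using assms by (auto simp: fun_eq_iff x'_def rr_def ss_def)
next
  assume "inS p f e a b c1 c2 J x" and "\<tau> < f" and "0 \<le> a \<tau> - b \<tau>"
  moreover have "(\<lambda>i. if i \<in> insert \<tau> J then a i + 1 + int (x' i) else b i + int (x' i))
      = (\<lambda>i. if i \<in> J then a i + 1 + int (x i) else b i + int (x i))"
    and "(\<lambda>i. if i \<notin> insert \<tau> J then a i + int e - int (x' i) else b i + int e - 1 - int (x' i))
      = (\<lambda>i. if i \<notin> J then a i + int e - int (x i) else b i + int e - 1 - int (x i))"
    using assms by (auto simp: fun_eq_iff x'_def rr_def)
  ultimately show "inS p f e a b c1 c2 (insert \<tau> J) x'"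
    using assms unfolding inS_def by (auto simp: x'_def rr_def)
qed

lemma maximal_in_J_imp_ge:
  assumes max: "\<forall>J' x'. inS p f e a b c1 c2 J' x' \<longrightarrow> Sle p f a b J x J' x' \<longrightarrow> (J', x') = (J, x)"
    and "inS p f e a b c1 c2 J x" and "\<tau> \<in> J" and "0 \<le> a \<tau> - b \<tau>"
  shows "int e \<le> int (x \<tau>) + rr a b \<tau>"
proof (rule ccontr)
  assume "\<not> ?thesis"
  then have "inS p f e a b c1 c2 (J - {\<tau>}) (x(\<tau> := nat (rr a b \<tau> + int (x \<tau>))))"
    using assms inS_remove_from_J by simp
  then have "J - {\<tau>} = J"
    using maximal_eq_if_ss_eq[OF max] ss_remove_from_J assms by blast
  with \<open>\<tau> \<in> J\<close> show False by blast
qed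

lemma maximal_notin_J_imp_less:
  assumes max: "\<forall>J' x'. inS p f e a b c1 c2 J' x' \<longrightarrow> Sle p f a b J x J' x' \<longrightarrow> (J', x') = (J, x)"
    and "inS p f e a b c1 c2 J x" and "\<tau> \<notin> J" and "\<tau> < f" and "0 \<le> a \<tau> - b \<tau>"
  shows "int (x \<tau>) < rr a b \<tau>"
proof (rule ccontr)
  assume "\<not> ?thesis"
  then have "rr a b \<tau> \<le> int (x \<tau>)" by simp
  then have "inS p f e a b c1 c2 (insert \<tau> J) (x(\<tau> := nat (int (x \<tau>) - rr a b \<tau>)))"
    using assms inS_insert_into_J by blast
  then have "insert \<tau> J = J"
    using maximal_eq_if_ss_eq[OF max] ss_insert_into_J assms \<open>rr a b \<tau> \<le> int (x \<tau>)\<close> by blast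
  with \<open>\<tau> \<notin> J\<close> show False by blast
qed

theorem proposition5p10:
  fixes p f e :: nat and n :: "nat \<Rightarrow> int" and c1 c2 :: int
    and a b :: "nat \<Rightarrow> int" and J :: "nat set" and x :: "nat \<Rightarrow> nat"
  assumes "prime p" and "1 \<le> f" and "1 \<le> e"
    and n_range: "\<forall>\<tau><f. 1 \<le> n \<tau> \<and> n \<tau> \<le> int p"
    and n_some: "\<exists>\<tau><f. n \<tau> < int p"
    and chi: "[c1 - c2 = Omega p f 0 n] (mod (int p ^ f - 1))"
    and weakly_generic: "\<forall>\<tau><f. int e \<le> n \<tau> \<and> n \<tau> \<le> int p - int e"
    and serre: "\<forall>\<tau><f. 0 \<le> a \<tau> - b \<tau> \<and> a \<tau> - b \<tau> \<le> int p - 1"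
    and Jx_in: "inS p f e a b c1 c2 J x"
    and Jx_max: "\<forall>J' x'. inS p f e a b c1 c2 J' x' \<longrightarrow> Sle p f a b J x J' x'
                   \<longrightarrow> (J', x') = (J, x)"
  shows "\<forall>\<tau><f. (tt e a b J x \<tau> \<in> II e a b J x \<tau> \<longleftrightarrow> tt e a b J x \<tau> < rr a b \<tau>)"
proof (intro allI impI)
  fix \<tau> assume "\<tau> < f"
  then have ab: "0 \<le> a \<tau> - b \<tau>" and "int (x \<tau>) \<le> int e - 1"
    using serre Jx_in \<open>1 \<le> e\<close> unfolding inS_def by fastforce+
  show "tt e a b J x \<tau> \<in> II e a b J x \<tau> \<longleftrightarrow> tt e a b J x \<tau> < rr a b \<tau>"
  proof (cases "\<tau> \<in> J")
    case True
    with maximal_in_J_imp_ge[OF Jx_max Jx_in _ ab]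
    show ?thesis by (auto simp: tt_def II_def ss_def rr_def)
  next
    case False
    with maximal_notin_J_imp_less[OF Jx_max Jx_in _ \<open>\<tau> < f\<close> ab] \<open>int (x \<tau>) \<le> int e - 1\<close>
    show ?thesis by (auto simp: tt_def II_def ss_def rr_def)
  qed
qed

end
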